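(* Let $(X,d)$ be a compact pointed metric space and let $((x_n,y_n))_{n=1}^\infty$ be a Lipschitz interpolating sequence for $\mathrm{Lip}_0(X)$ in $\widetilde X$. Then $d(x_n,y_n)\to 0$ as $n\to\infty$.
   Context: All spaces are real. $(X,d)$ has a base point $0$, $\widetilde{X}=\{(x,y)\in X\times X: x\neq y\}$. $\mathrm{Lip}_0(X)$ is the Banach space of Lipschitz $f:X\to\mathbb{R}$ with $f(0)=0$, normed by the best Lipschitz constant. A sequence $((x_n,y_n))_{n=1}^\infty$ in $\widetilde X$ is Lipschitz interpolating for $\mathrm{Lip}_0(X)$ if the operator $T:\mathrm{Lip}_0(X)\to\ell_\infty$, $T(f)=\big((f(x_n)-f(y_n))/d(x_n,y_n)\big)_{n}$, is surjective. *)

theory Defs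
  imports "HOL-Analysis.Analysis"
begin

definition Lip0 :: "'a::metric_space set \<Rightarrow> 'a \<Rightarrow> ('a \<Rightarrow> real) \<Rightarrow> bool" where
  "Lip0 X p f \<longleftrightarrow> f p = 0 \<and> (\<exists>C. C-lipschitz_on X f)"

text \<open>A sequence of pairs in X-tilde is Lipschitz interpolating if the operator
  T f = ((f(x_n) - f(y_n)) / d(x_n,y_n))_n from Lip_0(X) to l_infinity is surjective,
  i.e. every bounded real sequence is attained.\<close>
definition lipschitz_interpolating ::
    "'a::metric_space set \<Rightarrow> 'a \<Rightarrow> (nat \<Rightarrow> 'a) \<Rightarrow> (nat \<Rightarrow> 'a) \<Rightarrow> bool" where
  "lipschitz_interpolating X p x y \<longleftrightarrow>
     (\<forall>n. x n \<in> X \<and> y n \<in> X \<and> x n \<noteq> y n) \<and>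
     (\<forall>c::nat \<Rightarrow> real. bounded (range c) \<longrightarrow>
        (\<exists>f. Lip0 X p f \<and> (\<forall>n. (f (x n) - f (y n)) / dist (x n) (y n) = c n)))"

end

theory Submission
  imports Defs
begin

text \<open>If \<open>d(x\<^sub>n, y\<^sub>n)\<close> does not tend to \<open>0\<close>, compactness of \<open>X \<times> X\<close> gives a
  subsequence along which \<open>x\<^sub>n \<rightarrow> a\<close>, \<open>y\<^sub>n \<rightarrow> b\<close> with \<open>a \<noteq> b\<close>. Along it the difference
  quotients of any continuous, in particular any Lipschitz, function converge to
  \<open>(f a - f b) / d(a, b)\<close>. So the bounded sequence that alternates \<open>\<plusminus>1\<close> along this
  subsequence is not attained, contradicting surjectivity of \<open>T\<close>.\<close>

lemma not_convergent_alternating_sign: "\<not> convergent (\<lambda>k. (-1::real) ^ k)"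
proof
  assume "convergent (\<lambda>k. (-1::real) ^ k)"
  then obtain L where L: "(\<lambda>k. (-1::real) ^ k) \<longlonglongrightarrow> L"
    unfolding convergent_def by blast
  have "(\<lambda>k. (-1::real) ^ Suc k) \<longlonglongrightarrow> L" using L by (rule LIMSEQ_Suc)
  moreover have "(\<lambda>k. (-1::real) ^ Suc k) \<longlonglongrightarrow> -L" using tendsto_minus[OF L] by simp
  ultimately have "L = -L" by (rule LIMSEQ_unique)
  then have "L = 0" by simp
  moreover have "(\<lambda>k. \<bar>(-1::real) ^ k\<bar>) \<longlonglongrightarrow> \<bar>L\<bar>" using tendsto_rabs[OF L] .
  ultimately have "(\<lambda>k. 1::real) \<longlonglongrightarrow> 0" by simp
  then show False by (simp add: LIMSEQ_const_iff)
qed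

lemma not_tendsto_zero_subseq_bounded_below:
  fixes u :: "nat \<Rightarrow> 'a::real_normed_vector"
  assumes "\<not> u \<longlonglongrightarrow> 0"
  obtains e and r :: "nat \<Rightarrow> nat" where "e > 0" "strict_mono r" "\<And>k. e \<le> norm (u (r k))"
proof -
  obtain e where "e > 0" and "\<not> eventually (\<lambda>n. dist (u n) 0 < e) sequentially"
    using assms unfolding tendsto_iff by blast
  then have "\<exists>\<^sub>F n in sequentially. e \<le> norm (u n)"
    unfolding not_eventually by (simp add: not_less)
  then have "infinite {n. e \<le> norm (u n)}"
    unfolding cofinite_eq_sequentially[symmetric] frequently_cofinite .
  then obtain r :: "nat \<Rightarrow> nat" where "strict_mono r" and "\<And>k. r k \<in> {n. e \<le> norm (u n)}"
    using infinite_enumerate by blast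
  then show thesis using that[OF \<open>e > 0\<close>] by simp
qed

lemma compact_subseq_pairs_convergent:
  fixes X :: "'a::first_countable_topology set"
  assumes "compact X" and "\<And>n. x n \<in> X" and "\<And>n. y n \<in> X"
  obtains a b and s :: "nat \<Rightarrow> nat" where "a \<in> X" "b \<in> X" "strict_mono s"
    "(x \<circ> s) \<longlonglongrightarrow> a" "(y \<circ> s) \<longlonglongrightarrow> b"
proof -
  have "seq_compact (X \<times> X)"
    using compact_Times[OF assms(1) assms(1)] by (rule compact_imp_seq_compact)
  moreover have "\<forall>n. (x n, y n) \<in> X \<times> X" using assms(2,3) by simp
  ultimately obtain l s where "l \<in> X \<times> X" "strict_mono s"
      and lim: "((\<lambda>n. (x n, y n)) \<circ> s) \<longlonglongrightarrow> l"
    by (rule seq_compactE)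
  have "(x \<circ> s) \<longlonglongrightarrow> fst l" using tendsto_fst[OF lim] by (simp add: o_def)
  moreover have "(y \<circ> s) \<longlonglongrightarrow> snd l" using tendsto_snd[OF lim] by (simp add: o_def)
  moreover have "fst l \<in> X" "snd l \<in> X" using \<open>l \<in> X \<times> X\<close> by (auto simp: mem_Times_iff)
  ultimately show thesis using that \<open>strict_mono s\<close> by blast
qed

lemma compact_subseq_pairs_apart:
  fixes X :: "'a::metric_space set"
  assumes "compact X" and "\<And>n. x n \<in> X" and "\<And>n. y n \<in> X"
    and "\<not> (\<lambda>n. dist (x n) (y n)) \<longlonglongrightarrow> 0"
  obtains a b and g :: "nat \<Rightarrow> nat" where "a \<in> X" "b \<in> X" "a \<noteq> b" "strict_mono g"
    "(x \<circ> g) \<longlonglongrightarrow> a" "(y \<circ> g) \<longlonglongrightarrow> b"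
proof -
  obtain e and r :: "nat \<Rightarrow> nat"
    where "e > 0" "strict_mono r" and far: "\<And>k. e \<le> norm (dist (x (r k)) (y (r k)))"
    using not_tendsto_zero_subseq_bounded_below[OF assms(4)] by blast
  obtain a b s where "a \<in> X" "b \<in> X" "strict_mono s"
      and xa: "(x \<circ> r \<circ> s) \<longlonglongrightarrow> a" and yb: "(y \<circ> r \<circ> s) \<longlonglongrightarrow> b"
    by (rule compact_subseq_pairs_convergent[OF assms(1), of "x \<circ> r" "y \<circ> r"])
      (simp_all add: assms(2,3))
  have "e \<le> dist a b"
    using far by (intro LIMSEQ_le_const[OF tendsto_dist[OF xa yb]]) simp
  with \<open>e > 0\<close> have "a \<noteq> b" by auto
  moreover have "strict_mono (r \<circ> s)"
    using \<open>strict_mono r\<close> \<open>strict_mono s\<close> by (rule strict_mono_o)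
  ultimately show thesis
    using that[OF \<open>a \<in> X\<close> \<open>b \<in> X\<close>] xa yb by (simp add: o_assoc)
qed

lemma difference_quotients_tendsto:
  fixes f :: "'a::metric_space \<Rightarrow> real"
  assumes "continuous_on X f" and "\<And>k. x k \<in> X" and "\<And>k. y k \<in> X"
    and "a \<in> X" and "b \<in> X" and "a \<noteq> b"
    and "x \<longlonglongrightarrow> a" and "y \<longlonglongrightarrow> b"
  shows "(\<lambda>k. (f (x k) - f (y k)) / dist (x k) (y k)) \<longlonglongrightarrow> (f a - f b) / dist a b"
proof -
  have "(\<lambda>k. f (x k)) \<longlonglongrightarrow> f a"
    using continuous_on_tendsto_compose[OF assms(1,7,4)] assms(2) by simp
  moreover have "(\<lambda>k. f (y k)) \<longlonglongrightarrow> f b"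
    using continuous_on_tendsto_compose[OF assms(1,8,5)] assms(3) by simp
  ultimately show ?thesis
    using assms(6) by (intro tendsto_divide tendsto_diff tendsto_dist assms(7,8)) simp_all
qed

lemma bounded_extension_along_inj:
  fixes u :: "'i \<Rightarrow> 'a::real_normed_vector" and g :: "'i \<Rightarrow> 'j"
  assumes "inj g" and "bounded (range u)"
  obtains c :: "'j \<Rightarrow> 'a" where "bounded (range c)" "\<And>i. c (g i) = u i"
proof
  define c where "c j = (if j \<in> range g then u (inv g j) else 0)" for j
  have "range c \<subseteq> insert 0 (range u)" unfolding c_def by auto
  moreover have "bounded (insert 0 (range u))" using assms(2) by simp
  ultimately show "bounded (range c)" by (rule bounded_subset[rotated])
  show "c (g i) = u i" for i
    using assms(1) by (simp add: c_def)
qed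

lemma Lip0_continuous_on: "Lip0 X p f \<Longrightarrow> continuous_on X f"
  unfolding Lip0_def using lipschitz_on_continuous_on by blast

theorem proposition4p1:
  fixes X :: "'a::metric_space set" and p :: 'a and x y :: "nat \<Rightarrow> 'a"
  assumes "compact X" and "p \<in> X"
    and "lipschitz_interpolating X p x y"
  shows "(\<lambda>n. dist (x n) (y n)) \<longlonglongrightarrow> 0"
proof (rule ccontr)
  assume not_null: "\<not> (\<lambda>n. dist (x n) (y n)) \<longlonglongrightarrow> 0"
  have in_X: "\<And>n. x n \<in> X" "\<And>n. y n \<in> X"
    using assms(3) unfolding lipschitz_interpolating_def by auto
  obtain a b and g :: "nat \<Rightarrow> nat" where "a \<in> X" "b \<in> X" "a \<noteq> b" "strict_mono g"
      and xa: "(x \<circ> g) \<longlonglongrightarrow> a" and yb: "(y \<circ> g) \<longlonglongrightarrow> b"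
    using compact_subseq_pairs_apart[OF assms(1) in_X not_null] by blast
  have "bounded (range (\<lambda>k. (-1::real) ^ k))"
    unfolding bounded_iff by (auto simp: abs_power_minus)
  with strict_mono_imp_inj_on[OF \<open>strict_mono g\<close>]
  obtain c where "bounded (range c)" and cg: "\<And>k. c (g k) = (-1::real) ^ k"
    using bounded_extension_along_inj by blast
  then obtain f where "Lip0 X p f" and Tf: "\<And>n. (f (x n) - f (y n)) / dist (x n) (y n) = c n"
    using assms(3) unfolding lipschitz_interpolating_def by blast
  have "(\<lambda>k. (f (x (g k)) - f (y (g k))) / dist (x (g k)) (y (g k))) \<longlonglongrightarrow> (f a - f b) / dist a b"
    using xa yb
    by (intro difference_quotients_tendsto[OF Lip0_continuous_on[OF \<open>Lip0 X p f\<close>]])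
      (simp_all add: in_X \<open>a \<in> X\<close> \<open>b \<in> X\<close> \<open>a \<noteq> b\<close> o_def)
  then have "convergent (\<lambda>k. (-1::real) ^ k)"
    unfolding Tf cg convergent_def by blast
  then show False using not_convergent_alternating_sign by blast
qed

end
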